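(* Let $f=a_0+a_1x+\cdots+a_nx^n\in\mathbb{Z}[x]$ be a primitive polynomial. Suppose that $a_0=\pm p^k d$ for some positive integers $k$ and $d$ and a prime number $p$ with $p\nmid a_1 d$, and that every zero $\theta\in\mathbb{C}$ of $f$ satisfies $|\theta|>d$. Then $f$ is irreducible in $\mathbb{Z}[x]$.
   Context: A polynomial $a_0+a_1x+\cdots+a_nx^n\in\mathbb{Z}[x]$ is primitive if $\gcd(a_0,a_1,\ldots,a_n)=1$. *)

theory Defs
  imports "HOL-Computational_Algebra.Computational_Algebra" "HOL-Computational_Algebra.Polynomial_Factorial"
begin

end

theory Submission
  imports Defs
begin

text \<open>Let \<open>h\<close> be a factor of \<open>f\<close> of positive degree. Its roots are roots of \<open>f\<close>, so they
  all have absolute value \<open>> d \<ge> 1\<close>, and hence \<open>|h\<^sub>0| = |lead_coeff h| \<cdot> \<Prod>|\<theta>| > d\<close>. If \<open>p\<close>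
  did not divide \<open>h\<^sub>0\<close>, then \<open>h\<^sub>0\<close>, a divisor of \<open>p\<^sup>k d\<close> coprime to \<open>p\<close>, would divide \<open>d\<close>,
  which is impossible. So \<open>p\<close> divides the constant term of every nonconstant factor. Since \<open>f\<close>
  is primitive, a factorisation \<open>f = g h\<close> into non-units has both factors nonconstant, and then
  \<open>p\<close> would divide \<open>a\<^sub>1 = g\<^sub>0 h\<^sub>1 + g\<^sub>1 h\<^sub>0\<close>.\<close>

lemma norm_prod_mset_gt_power:
  fixes A :: "'a :: real_normed_field multiset" and d :: real
  assumes "d \<ge> 0" "\<And>x. x \<in># A \<Longrightarrow> norm x > d" "A \<noteq> {#}"
  shows "norm (prod_mset A) > d ^ size A"
  using assms(2,3)
proof (induction A)
  case empty
  then show ?case by simp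
next
  case (add x A)
  have "norm x > d" using add.prems by simp
  show ?case
  proof (cases "A = {#}")
    case True
    then show ?thesis using \<open>norm x > d\<close> by simp
  next
    case False
    then have "norm (prod_mset A) > d ^ size A" using add by simp
    then have "norm x * norm (prod_mset A) > d * d ^ size A"
      using \<open>norm x > d\<close> assms(1) by (intro mult_strict_mono') auto
    then show ?thesis by (simp add: norm_mult)
  qed
qed

lemma norm_coeff_0_gt_of_roots:
  fixes H :: "complex poly" and d :: real
  assumes "degree H > 0" "d \<ge> 0" "\<And>\<theta>. poly H \<theta> = 0 \<Longrightarrow> norm \<theta> > d"
  shows "norm (coeff H 0) > norm (lead_coeff H) * d ^ degree H"
proof -
  have "H \<noteq> 0" using assms(1) by auto
  then obtain A where size_A: "size A = degree H"
    and H_eq: "H = smult (lead_coeff H) (\<Prod>x\<in>#A. [:-x, 1:])"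
    using alg_closed_imp_factorization by blast
  let ?B = "image_mset uminus A"
  have "norm x > d" if "x \<in># ?B" for x
  proof -
    from that obtain y where "y \<in># A" "x = - y" by auto
    then have "poly H y = 0" by (subst H_eq) (auto simp: poly_prod_mset prod_mset_zero_iff)
    then show ?thesis using assms(3) \<open>x = - y\<close> by simp
  qed
  moreover have "?B \<noteq> {#}" using size_A assms(1) by auto
  ultimately have "norm (prod_mset ?B) > d ^ size ?B"
    by (rule norm_prod_mset_gt_power[OF assms(2)])
  moreover have "coeff H 0 = lead_coeff H * prod_mset ?B"
  proof -
    have "coeff H 0 = poly H 0" by (simp add: poly_0_coeff_0)
    also have "\<dots> = lead_coeff H * prod_mset ?B"
      by (subst H_eq) (simp add: poly_prod_mset multiset.map_comp o_def)
    finally show ?thesis .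
  qed
  moreover have "lead_coeff H \<noteq> 0" using \<open>H \<noteq> 0\<close> by simp
  ultimately show ?thesis using size_A by (simp add: norm_mult)
qed

lemma abs_coeff_0_gt_of_roots:
  fixes h :: "int poly" and d :: real
  assumes "degree h > 0" "d \<ge> 1"
    and "\<And>\<theta>::complex. poly (map_poly of_int h) \<theta> = 0 \<Longrightarrow> norm \<theta> > d"
  shows "\<bar>coeff h 0\<bar> > d"
proof -
  let ?H = "map_poly of_int h :: complex poly"
  have degree_H: "degree ?H = degree h" by (simp add: degree_map_poly)
  have "lead_coeff h \<noteq> 0" using assms(1) by auto
  then have "norm (lead_coeff ?H) \<ge> 1"
    by (simp add: degree_H coeff_map_poly del: leading_coeff_0_iff)
  have "d \<le> d ^ degree h"
    using power_increasing[of 1 "degree h" d] assms(1,2) by simp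
  also have "\<dots> \<le> norm (lead_coeff ?H) * d ^ degree h"
    using mult_right_mono[OF \<open>norm (lead_coeff ?H) \<ge> 1\<close>, of "d ^ degree h"] assms(2) by simp
  also have "\<dots> < norm (coeff ?H 0)"
    using norm_coeff_0_gt_of_roots[of ?H d] assms by (simp add: degree_H)
  finally have "norm (coeff ?H 0) > d" .
  then show ?thesis by (simp add: coeff_map_poly)
qed

lemma coeff_1_mult:
  fixes a b :: "'a :: comm_semiring_0 poly"
  shows "coeff (a * b) 1 = coeff a 0 * coeff b 1 + coeff a 1 * coeff b 0"
  by (simp add: coeff_mult atMost_Suc add.commute)

lemma degree_pos_if_content_1_not_unit:
  fixes a :: "'a :: factorial_ring_gcd poly"
  assumes "content a = 1" "\<not> is_unit a"
  shows "degree a > 0"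
proof (rule ccontr)
  assume "\<not> degree a > 0"
  then obtain c where "a = [:c:]" by (metis degree_eq_zeroE neq0_conv)
  with assms show False by (auto simp: is_unit_const_poly_iff normalize_1_iff)
qed

lemma map_poly_of_int_mult:
  "map_poly (of_int :: int \<Rightarrow> 'a :: comm_ring_1) (p * q) = map_poly of_int p * map_poly of_int q"
  by (rule poly_eqI) (simp add: coeff_map_poly coeff_mult)

lemma prime_dvd_coeff_0_of_factor:
  fixes f h :: "int poly" and p k d :: nat
  assumes "prime p" "d > 0" "h dvd f" "degree h > 0"
    and "\<bar>coeff f 0\<bar> = int (p ^ k * d)"
    and "\<And>\<theta>::complex. poly (map_poly of_int f) \<theta> = 0 \<Longrightarrow> cmod \<theta> > real d"
  shows "int p dvd coeff h 0"
proof (rule ccontr)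
  assume not_dvd: "\<not> int p dvd coeff h 0"
  from \<open>h dvd f\<close> obtain g where f_eq: "f = h * g" by blast
  have "coeff h 0 dvd coeff f 0" by (simp add: f_eq coeff_mult_0)
  then have "coeff h 0 dvd int p ^ k * int d"
    using assms(5) by (metis dvd_abs_iff of_nat_mult of_nat_power)
  moreover have "coprime (coeff h 0) (int p ^ k)"
    using prime_imp_coprime[of "int p" "coeff h 0"] not_dvd assms(1)
    by (simp add: coprime_commute[of "coeff h 0"])
  ultimately have "coeff h 0 dvd int d" by (simp add: coprime_dvd_mult_right_iff)
  then have "\<bar>coeff h 0\<bar> \<le> int d" using dvd_imp_le_int[of "int d"] assms(2) by simp
  moreover have "\<bar>coeff h 0\<bar> > real d"
  proof (rule abs_coeff_0_gt_of_roots)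
    fix \<theta> :: complex
    assume "poly (map_poly of_int h) \<theta> = 0"
    then have "poly (map_poly of_int f) \<theta> = 0"
      by (simp add: f_eq map_poly_of_int_mult)
    then show "cmod \<theta> > real d" by (rule assms(6))
  qed (use assms in auto)
  ultimately show False by linarith
qed

theorem theorem22:
  fixes f :: "int poly" and p k d :: nat
  assumes "content f = 1"
    and "prime p" and "k > 0" and "d > 0"
    and "coeff f 0 = int (p ^ k * d) \<or> coeff f 0 = - int (p ^ k * d)"
    and "\<not> int p dvd coeff f 1 * int d"
    and "\<And>\<theta>::complex. poly (map_poly of_int f) \<theta> = 0 \<Longrightarrow> cmod \<theta> > real d"
  shows "irreducible f"
proof (rule irreducibleI)
  show "f \<noteq> 0" using assms(1) by auto
  have abs_coeff_0: "\<bar>coeff f 0\<bar> = int (p ^ k * d)" using assms(5) by auto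
  have "int p dvd int p ^ k * int d" using assms(3) by (simp add: dvd_power dvd_mult2)
  then have "int p dvd coeff f 0" using abs_coeff_0 by (metis dvd_abs_iff of_nat_mult of_nat_power)
  moreover have "\<not> is_unit (int p)" using assms(2) by (metis prime_nat_int_transfer not_prime_unit)
  ultimately have "\<not> is_unit (coeff f 0)" by (metis dvd_unit_imp_unit)
  then show "\<not> is_unit f" by (auto simp: is_unit_poly_iff)
  fix a b assume f_eq: "f = a * b"
  show "is_unit a \<or> is_unit b"
  proof (rule ccontr)
    assume "\<not> (is_unit a \<or> is_unit b)"
    moreover have "content a = 1" "content b = 1"
      using assms(1) by (simp_all add: f_eq content_prod_eq_1_iff)
    ultimately have "degree a > 0" "degree b > 0"
      by (simp_all add: degree_pos_if_content_1_not_unit)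
    then have "int p dvd coeff a 0" "int p dvd coeff b 0"
      using prime_dvd_coeff_0_of_factor[OF assms(2,4) _ _ abs_coeff_0 assms(7)] f_eq by auto
    then have "int p dvd coeff f 1" unfolding f_eq coeff_1_mult by simp
    with assms(6) show False by simp
  qed
qed

end
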